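(* Let $R$ be an associative ring with identity and involution $*$, and let $a\in R^{\#}\cap R^{\dagger}$. Then $a\in R^{SEP}$ if and only if $aa^*a^{\dagger}a^{\dagger}a^2\in PE(R)$.
   Context: An involution on $R$ is a map $x\mapsto x^*$ with $(x^* )^*=x$, $(x+y)^*=x^*+y^*$, $(xy)^*=y^*x^*$. An element $a$ is Moore–Penrose invertible if there is $b$ with $aba=a$, $bab=b$, $(ab)^*=ab$, $(ba)^*=ba$; such $b$ is unique, denoted $a^{\dagger}$, and $R^{\dagger}$ is the set of such $a$. An element $a$ is group invertible if there is $b$ with $aba=a$, $bab=b$, $ab=ba$; such $b$ is unique, denoted $a^{\#}$, and $R^{\#}$ is the set of such $a$. $PE(R)=\{e\in R: e^2=e=e^*\}$ is the set of projections. For $a\in R^{\#}\cap R^{\dagger}$, $a$ is SEP if $a^*=a^{\dagger}=a^{\#}$; $R^{SEP}$ denotes the set of SEP elements. *)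

theory Defs
  imports Main
begin

text \<open>An involution on a ring, given as a function s (for x \<mapsto> x^*).\<close>
definition involution :: "('a::ring_1 \<Rightarrow> 'a) \<Rightarrow> bool" where
  "involution s \<longleftrightarrow> (\<forall>x. s (s x) = x) \<and> (\<forall>x y. s (x + y) = s x + s y)
     \<and> (\<forall>x y. s (x * y) = s y * s x)"

definition is_MP_inverse :: "('a::ring_1 \<Rightarrow> 'a) \<Rightarrow> 'a \<Rightarrow> 'a \<Rightarrow> bool" where
  "is_MP_inverse s a b \<longleftrightarrow> a * b * a = a \<and> b * a * b = b \<and> s (a * b) = a * b \<and> s (b * a) = b * a"

definition MP_invertible :: "('a::ring_1 \<Rightarrow> 'a) \<Rightarrow> 'a \<Rightarrow> bool" where
  "MP_invertible s a \<longleftrightarrow> (\<exists>b. is_MP_inverse s a b)"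

definition MP_inv :: "('a::ring_1 \<Rightarrow> 'a) \<Rightarrow> 'a \<Rightarrow> 'a" where
  "MP_inv s a = (THE b. is_MP_inverse s a b)"

definition is_group_inverse :: "'a::ring_1 \<Rightarrow> 'a \<Rightarrow> bool" where
  "is_group_inverse a b \<longleftrightarrow> a * b * a = a \<and> b * a * b = b \<and> a * b = b * a"

definition group_invertible :: "'a::ring_1 \<Rightarrow> bool" where
  "group_invertible a \<longleftrightarrow> (\<exists>b. is_group_inverse a b)"

definition group_inv :: "'a::ring_1 \<Rightarrow> 'a" where
  "group_inv a = (THE b. is_group_inverse a b)"

definition projections :: "('a::ring_1 \<Rightarrow> 'a) \<Rightarrow> 'a set" where
  "projections s = {e. e * e = e \<and> e = s e}"

definition SEP :: "('a::ring_1 \<Rightarrow> 'a) \<Rightarrow> 'a \<Rightarrow> bool" where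
  "SEP s a \<longleftrightarrow> group_invertible a \<and> MP_invertible s a \<and>
     s a = MP_inv s a \<and> MP_inv s a = group_inv a"

end

theory Submission
  imports Defs
begin

text \<open>Write b for the Moore-Penrose and g for the group inverse of a, and e = a a* b b a^2.
  Since a b e = e and both a b and e are hermitian, e = e a b. On the other hand a is a left
  multiple of e, so a = a a b, which makes g a Moore-Penrose inverse of a, i.e. b = g. Then
  e = a a*, and a a* being idempotent forces a a* a = a, so that a* is the Moore-Penrose inverse
  of a as well. Conversely, if a* = b = g then e = g a, which is a projection.\<close>

lemma involution_involutive: "involution s \<Longrightarrow> s (s x) = x"
  unfolding involution_def by blast

lemma involution_mult: "involution s \<Longrightarrow> s (x * y) = s y * s x"
  unfolding involution_def by blast

lemma MP_inverse_unique:
  assumes "involution s" "is_MP_inverse s a b" "is_MP_inverse s a c"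
  shows "b = c"
proof -
  note star_mult = involution_mult[OF assms(1)]
  have b: "a * b * a = a" "b * a * b = b" "s (a * b) = a * b" "s (b * a) = b * a"
    using assms(2) unfolding is_MP_inverse_def by auto
  have c: "a * c * a = a" "c * a * c = c" "s (a * c) = a * c" "s (c * a) = c * a"
    using assms(3) unfolding is_MP_inverse_def by auto
  have "b = b * s (a * b)"
    using b by (simp add: mult.assoc)
  also have "\<dots> = b * s b * s (a * c * a)"
    using c by (simp add: star_mult mult.assoc)
  also have "\<dots> = b * s (a * b) * s (a * c)"
    by (simp add: star_mult mult.assoc)
  also have "\<dots> = b * a * c"
    using b c by (simp add: mult.assoc)
  finally have left: "b = b * a * c" .
  have "c = s (c * a) * c"
    using c by simp
  also have "\<dots> = s (a * b * a) * s c * c"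
    using b by (simp add: star_mult)
  also have "\<dots> = s (b * a) * s (c * a) * c"
    by (simp add: star_mult mult.assoc)
  also have "\<dots> = b * a * c"
    using b c by (simp add: mult.assoc)
  finally show ?thesis
    using left by simp
qed

lemma MP_inv_eqI:
  assumes "involution s" "is_MP_inverse s a b"
  shows "MP_inv s a = b"
  unfolding MP_inv_def using assms MP_inverse_unique by blast

lemma group_inverse_unique:
  assumes "is_group_inverse a b" "is_group_inverse a c"
  shows "b = c"
proof -
  have b: "a * b * a = a" "b * a * b = b" "a * b = b * a"
    using assms(1) unfolding is_group_inverse_def by auto
  have c: "a * c * a = a" "c * a * c = c" "a * c = c * a"
    using assms(2) unfolding is_group_inverse_def by auto
  have "b = b * b * (a * c * a)"
    using b c by (metis mult.assoc)
  also have "\<dots> = b * a * c"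
    using b c by (metis mult.assoc)
  finally have left: "b = b * a * c" .
  have "c = (a * b * a) * c * c"
    using b c by (metis mult.assoc)
  also have "\<dots> = b * a * c"
    using b c by (metis mult.assoc)
  finally show ?thesis
    using left by simp
qed

lemma group_inv_eqI: "is_group_inverse a b \<Longrightarrow> group_inv a = b"
  unfolding group_inv_def using group_inverse_unique by blast

lemma MP_inverse_mult_adjoint:
  assumes "involution s" "is_MP_inverse s a b"
  shows "b * (a * s a * x) = s a * x"
proof -
  have b: "a * (b * a) = a" "s (b * a) = b * a"
    using assms(2) unfolding is_MP_inverse_def by (simp_all add: mult.assoc)
  have "b * a * s a = s (b * a) * s a"
    using b by simp
  also have "\<dots> = s a"
    by (metis b involution_mult[OF assms(1)])
  finally show ?thesis
    by (metis mult.assoc)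
qed

lemma MP_inverse_adjoint_mult_adjoint:
  assumes "involution s" "is_MP_inverse s a b"
  shows "s b * (s a * x) = a * b * x"
proof -
  have "s b * s a = a * b"
    using assms by (simp add: is_MP_inverse_def flip: involution_mult)
  then show ?thesis
    by (metis mult.assoc)
qed

lemma hermitian_absorbs_hermitian:
  assumes "involution s" "s p = p" "s e = e" "p * e = e"
  shows "e * p = e"
  by (metis assms involution_mult)

lemma group_inverse_mult_power2:
  assumes "is_group_inverse a g"
  shows "g * a ^ 2 = a" "x * g * g * a ^ 2 = x * g * a"
proof -
  have g: "a * g * a = a" "a * g = g * a"
    using assms unfolding is_group_inverse_def by auto
  have "g * a ^ 2 = a * g * a"
    using g(2) by (simp add: power2_eq_square flip: mult.assoc)
  then show ga2: "g * a ^ 2 = a"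
    using g(1) by simp
  have "x * g * g * a ^ 2 = x * g * (g * a ^ 2)"
    by (simp add: mult.assoc)
  then show "x * g * g * a ^ 2 = x * g * a"
    using ga2 by simp
qed

lemma MP_inverse_mult_in_projections:
  assumes "is_MP_inverse s a b"
  shows "b * a \<in> projections s"
proof -
  have "b * a * (b * a) = b * a * b * a"
    by (simp add: mult.assoc)
  then show ?thesis
    using assms unfolding is_MP_inverse_def projections_def by simp
qed

lemma MP_projections_left_cancel:
  assumes "involution s" "is_MP_inverse s a b" "is_group_inverse a g"
  shows "a * s (g * a) * (a * b * b * a) = a"
proof -
  have b: "a*b*a = a" "b*a*b = b" "s (a*b) = a*b" "s (b*a) = b*a"
    using assms(2) unfolding is_MP_inverse_def by auto
  have g: "a*g*a = a" "a*g = g*a"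
    using assms(3) unfolding is_group_inverse_def by auto
  have "s (g * a) * (a * b) = s (a * b * (g * a))"
    using assms(1) b by (simp add: involution_mult)
  also have "a * b * (g * a) = g * a"
    using b g by (metis mult.assoc)
  finally have ab: "s (g * a) * (a * b) = s (g * a)" .
  have "s (g * a) * (b * a) = s (b * a * (g * a))"
    using assms(1) b by (simp add: involution_mult)
  also have "b * a * (g * a) = b * a"
    using g by (metis mult.assoc)
  finally have ba: "s (g * a) * (b * a) = b * a"
    using b by simp
  have "a * s (g * a) * (a * b * b * a) = a * (s (g * a) * (a * b)) * (b * a)"
    by (simp add: mult.assoc)
  also have "\<dots> = a"
    using ab ba b by (simp add: mult.assoc)
  finally show ?thesis .
qed

lemma left_multiple_eq_self:
  assumes "involution s" "is_MP_inverse s a b" "is_group_inverse a g"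
  shows "\<exists>l. l * (a * s a * b * b * a ^ 2) = a"
proof -
  define w where "w = a * s (g * a)"
  have w: "w * (a * b * b * a * x) = a * x" for x
  proof -
    have "w * (a * b * b * a * x) = w * (a * b * b * a) * x"
      by (simp add: mult.assoc)
    then show ?thesis
      using MP_projections_left_cancel[OF assms] unfolding w_def by simp
  qed
  \<comment> \<open>b* b turns a a* into a b; then w cancels a b b a twice and g cancels a second factor a.\<close>
  have bab: "b * a * b = b"
    using assms(2) unfolding is_MP_inverse_def by simp
  have "s b * b * (a * s a * b * b * a ^ 2) = a * b * b * b * a ^ 2"
    using MP_inverse_mult_adjoint[OF assms(1,2)] MP_inverse_adjoint_mult_adjoint[OF assms(1,2)]
    by (simp add: mult.assoc)
  also have "\<dots> = a * b * (b * a * b) * b * a ^ 2"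
    using bab by simp
  also have "\<dots> = a * b * b * a * (b * b * a ^ 2)"
    by (simp add: mult.assoc)
  finally have "w * (s b * b * (a * s a * b * b * a ^ 2)) = a * (b * b * a ^ 2)"
    using w by (simp add: mult.assoc)
  also have "\<dots> = a * b * b * a * a"
    by (simp add: power2_eq_square mult.assoc)
  finally have "w * (w * (s b * b * (a * s a * b * b * a ^ 2))) = a ^ 2"
    using w[of a] by (simp add: power2_eq_square)
  then have "g * (w * (w * (s b * b * (a * s a * b * b * a ^ 2)))) = a"
    using group_inverse_mult_power2(1)[OF assms(3)] by simp
  then show ?thesis
    by (metis mult.assoc)
qed

lemma hermitian_imp_EP:
  assumes "involution s" "is_MP_inverse s a b" "is_group_inverse a g"
    and "s (a * s a * b * b * a ^ 2) = a * s a * b * b * a ^ 2"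
  shows "a * a * b = a"
proof -
  define e where "e = a * s a * b * b * a ^ 2"
  have b: "a * b * a = a" "s (a * b) = a * b"
    using assms(2) unfolding is_MP_inverse_def by auto
  have "a * b * e = (a * b * a) * (s a * b * b * a ^ 2)"
    unfolding e_def by (simp add: mult.assoc)
  also have "\<dots> = e"
    unfolding e_def b(1) by (simp add: mult.assoc)
  finally have "a * b * e = e" .
  then have e_ab: "e * (a * b) = e"
    using hermitian_absorbs_hermitian[OF assms(1) b(2)] assms(4) unfolding e_def by blast
  obtain l where l: "l * e = a"
    using left_multiple_eq_self[OF assms(1-3)] unfolding e_def by blast
  have "a = l * (e * (a * b))"
    using l e_ab by simp
  also have "\<dots> = a * a * b"
    using l by (simp flip: mult.assoc)
  finally show ?thesis ..
qed

lemma EP_group_inverse_is_MP_inverse: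
  assumes "is_MP_inverse s a b" "is_group_inverse a g" "a * a * b = a"
  shows "is_MP_inverse s a g"
proof -
  have g: "a * g * a = a" "g * a * g = g" "a * g = g * a"
    using assms(2) unfolding is_group_inverse_def by auto
  have "g * a = g * a * a * b"
    using assms(3) by (metis mult.assoc)
  also have "\<dots> = a * b"
    using g by (metis mult.assoc)
  finally show ?thesis
    using assms(1) g unfolding is_MP_inverse_def by simp
qed

lemma EP_adjoint_mult_power2:
  assumes "involution s" "is_MP_inverse s a g" "is_group_inverse a g"
  shows "a * s a * g * g * a ^ 2 = a * s a"
proof -
  have "s a * (g * a) = s a * s (g * a)"
    using assms(2) unfolding is_MP_inverse_def by simp
  also have "\<dots> = s (g * a ^ 2)"
    using assms(1) by (simp add: involution_mult power2_eq_square mult.assoc)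
  finally have "s a * (g * a) = s a"
    using group_inverse_mult_power2(1)[OF assms(3)] by simp
  then show ?thesis
    using group_inverse_mult_power2(2)[OF assms(3), of "a * s a"] by (simp add: mult.assoc)
qed

lemma partial_isometry_MP_inverse:
  assumes "involution s" "a * s a * a = a"
  shows "is_MP_inverse s a (s a)"
proof -
  have "s a * a * s a = s (a * s a * a)"
    using assms(1) by (simp add: involution_mult involution_involutive mult.assoc)
  then show ?thesis
    using assms unfolding is_MP_inverse_def
    by (simp add: involution_mult involution_involutive)
qed

lemma idempotent_imp_partial_isometry:
  assumes "involution s" "is_MP_inverse s a b" "a * s a * (a * s a) = a * s a"
  shows "a * s a * a = a"
proof -
  have b: "a * b * a = a" "s a * s b = b * a"
    using assms(1,2) unfolding is_MP_inverse_def by (simp_all flip: involution_mult)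
  have "a * s a * a = a * s a * (a * b * a)"
    using b by simp
  also have "\<dots> = a * s a * (a * s a) * s b"
    using b by (simp add: mult.assoc)
  also have "\<dots> = a * b * a"
    using assms(3) b by (simp add: mult.assoc)
  finally show ?thesis
    using b by simp
qed

lemma SEP_inverse_imp_projection:
  assumes "is_MP_inverse s a g" "is_group_inverse a g" "s a = g"
  shows "a * s a * g * g * a ^ 2 \<in> projections s"
proof -
  have g: "a * g = g * a" "g * a * g = g"
    using assms(2) unfolding is_group_inverse_def by auto
  have "a * s a * g * g * a ^ 2 = a * g * (g * a)"
    using group_inverse_mult_power2(2)[OF assms(2)] assms(3) by (simp add: mult.assoc)
  also have "\<dots> = g * a"
    using g by (simp flip: mult.assoc)
  finally show ?thesis
    using MP_inverse_mult_in_projections[OF assms(1)] by simp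
qed

lemma projection_imp_SEP_inverse:
  assumes "involution s" "is_MP_inverse s a b" "is_group_inverse a g"
    and e: "a * s a * b * b * a ^ 2 \<in> projections s"
  shows "b = g" "s a = b"
proof -
  have "a * a * b = a"
    using hermitian_imp_EP[OF assms(1-3)] e unfolding projections_def by simp
  then have "is_MP_inverse s a g"
    by (rule EP_group_inverse_is_MP_inverse[OF assms(2,3)])
  then show "b = g"
    by (rule MP_inverse_unique[OF assms(1,2)])
  then have "a * s a * b * b * a ^ 2 = a * s a"
    using EP_adjoint_mult_power2[OF assms(1) _ assms(3)] assms(2) by blast
  then have "a * s a * (a * s a) = a * s a"
    using e unfolding projections_def by simp
  then have "a * s a * a = a"
    by (rule idempotent_imp_partial_isometry[OF assms(1,2)])
  then have "is_MP_inverse s a (s a)"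
    by (rule partial_isometry_MP_inverse[OF assms(1)])
  then show "s a = b"
    using MP_inverse_unique[OF assms(1,2)] by simp
qed

theorem theorem2p3:
  fixes s :: "'a::ring_1 \<Rightarrow> 'a" and a :: 'a
  assumes "involution s"
    and "group_invertible a" and "MP_invertible s a"
  shows "SEP s a \<longleftrightarrow> a * s a * MP_inv s a * MP_inv s a * a ^ 2 \<in> projections s"
proof -
  obtain b where b: "is_MP_inverse s a b"
    using assms(3) unfolding MP_invertible_def by blast
  obtain g where g: "is_group_inverse a g"
    using assms(2) unfolding group_invertible_def by blast
  have "MP_inv s a = b"
    by (rule MP_inv_eqI[OF assms(1) b])
  moreover have "SEP s a \<longleftrightarrow> s a = b \<and> b = g"
    using assms \<open>MP_inv s a = b\<close> group_inv_eqI[OF g] unfolding SEP_def by auto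
  ultimately show ?thesis
    using SEP_inverse_imp_projection[OF _ g] projection_imp_SEP_inverse[OF assms(1) b g] b
    by auto
qed

end
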